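(* For $a\in\mathbb{R}$, let the polynomials $H_m(z,a)$ in $z$ be defined by $\sum_{m\ge0}H_m(z,a)t^m=\frac{1}{1+t+at^2+zt^3}$, and let $I_a=\left(-\infty,\frac{-2+9a-2\sqrt{(1-3a)^3}}{27}\right]$. Let $S$ be a dense subset of $[-1,1/3]$ and fix $m\in\mathbb{N}$. If $\mathcal{Z}(H_m(z,a))\subseteq I_a$ for all $a\in S$, then $\mathcal{Z}(H_m(z,a^* ))\subseteq I_{a^*}$ for all $a^*\in[-1,1/3]$.
   Context: $\mathcal{Z}(H_m(z,a))$ denotes the set of zeros in $z$ of the polynomial $H_m(z,a)$. *)

theory Defs
  imports "HOL-Analysis.Analysis" "HOL-Computational_Algebra.Formal_Power_Series"
begin

text \<open>H_m(z,a) evaluated at a complex point z: the m-th coefficient of the formal power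
  series 1/(1 + t + a t^2 + z t^3) (constant term 1, so the inverse is the genuine one).\<close>
definition H :: "nat \<Rightarrow> complex \<Rightarrow> real \<Rightarrow> complex" where
  "H m z a = fps_nth (inverse (1 + fps_X + fps_const (complex_of_real a) * fps_X ^ 2
                               + fps_const z * fps_X ^ 3)) m"

definition Zset :: "nat \<Rightarrow> real \<Rightarrow> complex set" where
  "Zset m a = {z. H m z a = 0}"

definition Iint :: "real \<Rightarrow> real set" where
  "Iint a = {.. (-2 + 9*a - 2 * sqrt ((1 - 3*a) ^ 3)) / 27}"

end

(*
  H_m(z,a) is a polynomial in z of degree m div 3 whose coefficients are polynomials in a, and
  its leading coefficient does not vanish for a < 1. Zeros of polynomials depend continuously on
  the coefficients as long as the degree does not drop, so every zero of H_m(_, a') is a limit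
  of zeros of H_m(_, a) for a in S tending to a'. These are real and bounded by the right
  endpoint of I_a, which is continuous in a; hence the limit lies in I_a'.
*)

theory Submission
  imports Defs "HOL-Computational_Algebra.Fundamental_Theorem_Algebra"
begin

lemma H_recurrence:
  fixes z :: complex and a :: real
  shows "H 0 z a = 1" "H (Suc 0) z a = -1" "H (Suc (Suc 0)) z a = 1 - of_real a"
    "H (Suc (Suc (Suc n))) z a = - H (Suc (Suc n)) z a - of_real a * H (Suc n) z a - z * H n z a"
proof -
  define D :: "complex fps" where
    "D = 1 + fps_X + fps_const (of_real a) * fps_X ^ 2 + fps_const z * fps_X ^ 3"
  define F where "F = inverse D"
  have H_F: "H k z a = fps_nth F k" for k by (simp add: H_def F_def D_def)
  have "D * F = 1" unfolding F_def by (rule inverse_mult_eq_1') (simp add: D_def)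
  then have "F + fps_X * F + fps_const (of_real a) * (fps_X ^ 2 * F)
      + fps_const z * (fps_X ^ 3 * F) = 1"
    by (simp add: D_def algebra_simps)
  then have coeffs: "fps_nth F k + fps_nth (fps_X * F) k + of_real a * fps_nth (fps_X ^ 2 * F) k
      + z * fps_nth (fps_X ^ 3 * F) k = (if k = 0 then 1 else 0)" for k
    by (metis fps_add_nth fps_mult_left_const_nth fps_one_nth)
  have F0: "fps_nth F 0 = 1"
    using coeffs[of 0] by (simp add: fps_X_power_mult_nth)
  have F1: "fps_nth F 1 = - fps_nth F 0"
    using coeffs[of 1] by (simp add: fps_X_power_mult_nth) algebra
  have F2: "fps_nth F 2 = - fps_nth F 1 - of_real a * fps_nth F 0"
    using coeffs[of 2] by (simp add: fps_X_power_mult_nth) algebra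
  have F3: "fps_nth F (n + 3) = - fps_nth F (n + 2) - of_real a * fps_nth F (n + 1) - z * fps_nth F n"
    using coeffs[of "n + 3"] by (simp add: fps_X_power_mult_nth) algebra
  show "H 0 z a = 1" "H (Suc 0) z a = -1" "H (Suc (Suc 0)) z a = 1 - of_real a"
    "H (Suc (Suc (Suc n))) z a = - H (Suc (Suc n)) z a - of_real a * H (Suc n) z a - z * H n z a"
    using F0 F1 F2 F3 unfolding H_F by (simp_all add: eval_nat_numeral)
qed

fun H_poly :: "nat \<Rightarrow> real \<Rightarrow> complex poly" where
  "H_poly 0 a = 1"
| "H_poly (Suc 0) a = -1"
| "H_poly (Suc (Suc 0)) a = [:1 - of_real a:]"
| "H_poly (Suc (Suc (Suc n))) a =
     - H_poly (Suc (Suc n)) a - smult (of_real a) (H_poly (Suc n) a) - pCons 0 (H_poly n a)"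

lemma poly_H_poly: "poly (H_poly n a) z = H n z a"
  by (induction n a rule: H_poly.induct) (simp_all add: H_recurrence algebra_simps)

lemma degree_H_poly_le: "degree (H_poly n a) \<le> n div 3"
proof (induction n a rule: H_poly.induct)
  case (4 n a)
  then show ?case
    by (auto simp: degree_pCons_eq_if intro!: degree_diff_le order.trans[OF degree_smult_le])
qed simp_all

lemma continuous_coeff_H_poly: "continuous_on UNIV (\<lambda>b. coeff (H_poly n b) k)"
proof (induction n "0::real" arbitrary: k rule: H_poly.induct)
  case (4 n k)
  have "continuous_on UNIV (\<lambda>b. coeff (pCons 0 (H_poly n b)) k)"
    using "4"(3) by (cases k) auto
  with "4"(1,2) show ?case
    by (simp only: H_poly.simps coeff_diff coeff_minus coeff_smult) (intro continuous_intros)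
next
  case (3 k)
  show ?case by (cases k) (auto intro!: continuous_intros)
qed (auto simp: coeff_pCons split: nat.split)

lemma coeff_H_poly_top:
  "coeff (H_poly (3 * q) a) q = (-1) ^ q \<and>
   coeff (H_poly (3 * q + 1) a) q = - ((-1) ^ q * of_nat (q + 1)) \<and>
   coeff (H_poly (3 * q + 2) a) q = (-1) ^ q * of_nat (q + 1) * (of_nat (q + 2) / 2 - of_real a)"
proof (induction q)
  case 0
  show ?case by (simp add: numeral_2_eq_2)
next
  case (Suc q)
  have rec: "coeff (H_poly (n + 3) a) (Suc k)
      = - coeff (H_poly (n + 2) a) (Suc k) - of_real a * coeff (H_poly (n + 1) a) (Suc k)
        - coeff (H_poly n a) k"
    for n k by (simp add: eval_nat_numeral)
  have above_degree: "coeff (H_poly (3 * q + r) a) (Suc q) = 0" if "r < 3" for r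
    by (rule coeff_eq_0, rule le_less_trans[OF degree_H_poly_le]) (use that in simp)
  have c0: "coeff (H_poly (3 * q) a) q = (-1) ^ q"
    and c1: "coeff (H_poly (3 * q + 1) a) q = - ((-1) ^ q * of_nat (q + 1))"
    and c2: "coeff (H_poly (3 * q + 2) a) q
      = (-1) ^ q * of_nat (q + 1) * (of_nat (q + 2) / 2 - of_real a)"
    using Suc.IH by blast+
  have index_arith:
    "3 * q + 1 + 3 = 3 * q + 4" "3 * q + 1 + 2 = 3 * q + 3" "3 * q + 1 + 1 = 3 * q + 2"
    "3 * q + 2 + 3 = 3 * q + 5" "3 * q + 2 + 2 = 3 * q + 4" "3 * q + 2 + 1 = 3 * q + 3"
    by simp_all
  have "coeff (H_poly (3 * q + 3) a) (Suc q)
      = - coeff (H_poly (3 * q + 2) a) (Suc q) - of_real a * coeff (H_poly (3 * q + 1) a) (Suc q)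
        - coeff (H_poly (3 * q) a) q"
    by (rule rec)
  also have "\<dots> = (-1) ^ Suc q"
    using above_degree[of 1] above_degree[of 2] c0 by simp
  finally have d0: "coeff (H_poly (3 * q + 3) a) (Suc q) = (-1) ^ Suc q" .
  have "coeff (H_poly (3 * q + 4) a) (Suc q)
      = - coeff (H_poly (3 * q + 3) a) (Suc q) - of_real a * coeff (H_poly (3 * q + 2) a) (Suc q)
        - coeff (H_poly (3 * q + 1) a) q"
    using rec[of "3 * q + 1" q] unfolding index_arith .
  also have "\<dots> = - ((-1) ^ Suc q * of_nat (Suc q + 1))"
    using above_degree[of 2] d0 c1 by (simp add: algebra_simps)
  finally have d1:
    "coeff (H_poly (3 * q + 4) a) (Suc q) = - ((-1) ^ Suc q * of_nat (Suc q + 1))" .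
  have "coeff (H_poly (3 * q + 5) a) (Suc q)
      = - coeff (H_poly (3 * q + 4) a) (Suc q) - of_real a * coeff (H_poly (3 * q + 3) a) (Suc q)
        - coeff (H_poly (3 * q + 2) a) q"
    using rec[of "3 * q + 2" q] unfolding index_arith .
  also have "\<dots> = (-1) ^ Suc q * of_nat (Suc q + 1) * (of_nat (Suc q + 2) / 2 - of_real a)"
    using d0 d1 c2 by (simp add: field_simps)
  finally have d2: "coeff (H_poly (3 * q + 5) a) (Suc q)
      = (-1) ^ Suc q * of_nat (Suc q + 1) * (of_nat (Suc q + 2) / 2 - of_real a)" .
  have "3 * Suc q = 3 * q + 3" "3 * Suc q + 1 = 3 * q + 4" "3 * Suc q + 2 = 3 * q + 5"
    by simp_all
  with d0 d1 d2 show ?case by (simp only:)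
qed

lemma coeff_H_poly_top_nonzero:
  assumes "a < 1"
  shows "coeff (H_poly n a) (n div 3) \<noteq> 0"
proof -
  define q where "q = n div 3"
  have sign: "(-1 :: complex) ^ q \<noteq> 0" by simp
  have "(of_nat (q + 1) :: complex) \<noteq> 0" by (metis of_nat_eq_0_iff add_is_0 one_neq_zero)
  moreover have "Re (of_nat (q + 2) / 2 - complex_of_real a) > 0" using assms by simp
  then have "of_nat (q + 2) / 2 - complex_of_real a \<noteq> 0"
    by (metis less_irrefl zero_complex.simps(1))
  moreover have "n = 3 * q \<or> n = 3 * q + 1 \<or> n = 3 * q + 2" unfolding q_def by presburger
  ultimately have "coeff (H_poly n a) q \<noteq> 0"
    using coeff_H_poly_top[of q a] sign by (metis mult_eq_0_iff neg_equal_0_iff_equal)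
  then show ?thesis unfolding q_def .
qed

lemma degree_H_poly:
  assumes "a < 1"
  shows "degree (H_poly n a) = n div 3"
  using degree_H_poly_le coeff_H_poly_top_nonzero[OF assms] by (meson antisym le_degree)

lemma norm_poly_ge_lead_coeff_mult_root_dist:
  fixes p :: "complex poly"
  assumes "0 \<le> e" and roots_far: "\<And>x. poly p x = 0 \<Longrightarrow> e \<le> cmod (z - x)"
  shows "cmod (lead_coeff p) * e ^ degree p \<le> cmod (poly p z)"
proof (cases "p = 0")
  case False
  have prod_ge: "e ^ size M \<le> cmod (\<Prod>x\<in>#M. z - x)" if "\<forall>x\<in>#M. poly p x = 0" for M
    using that
  proof (induction M)
    case (add x M)
    then have "e * e ^ size M \<le> cmod (z - x) * cmod (\<Prod>x\<in>#M. z - x)"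
      using \<open>0 \<le> e\<close> roots_far by (intro mult_mono) auto
    then show ?case by (simp add: norm_mult)
  qed simp
  have "e ^ degree p \<le> cmod (\<Prod>x\<in>#proots p. z - x)"
    using prod_ge[of "proots p"] False by (simp add: size_proots_complex)
  moreover have "poly p z = lead_coeff p * (\<Prod>x\<in>#proots p. z - x)"
    by (subst complex_poly_decompose_multiset[symmetric]) (simp add: poly_prod_mset)
  ultimately show ?thesis
    by (simp add: norm_mult mult_left_mono)
qed simp

lemma poly_root_near:
  fixes p :: "complex poly"
  assumes "0 < e" and "cmod (poly p z) < cmod (lead_coeff p) * e ^ degree p"
  shows "\<exists>x. poly p x = 0 \<and> cmod (z - x) < e"
  using norm_poly_ge_lead_coeff_mult_root_dist[of e p z] assms by force

lemma eventually_root_near_of_coeffs_tendsto: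
  fixes P :: "nat \<Rightarrow> complex poly"
  assumes coeff_lim: "\<And>k. (\<lambda>n. coeff (P n) k) \<longlonglongrightarrow> coeff p k"
    and degree_P: "\<And>n. degree (P n) = degree p"
    and "p \<noteq> 0" and "poly p z = 0" and "0 < e"
  shows "eventually (\<lambda>n. \<exists>x. poly (P n) x = 0 \<and> cmod (z - x) < e) sequentially"
proof -
  have "(\<lambda>n. \<Sum>i\<le>degree p. coeff (P n) i * z ^ i) \<longlonglongrightarrow> (\<Sum>i\<le>degree p. coeff p i * z ^ i)"
    by (intro tendsto_intros coeff_lim)
  then have "(\<lambda>n. poly (P n) z) \<longlonglongrightarrow> poly p z"
    by (simp add: poly_altdef degree_P)
  then have "(\<lambda>n. cmod (lead_coeff (P n)) * e ^ degree p - cmod (poly (P n) z))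
      \<longlonglongrightarrow> cmod (lead_coeff p) * e ^ degree p - cmod (poly p z)"
    using coeff_lim[of "degree p"] by (intro tendsto_intros) (simp_all add: degree_P)
  moreover have "cmod (lead_coeff p) * e ^ degree p - cmod (poly p z) > 0"
    using \<open>p \<noteq> 0\<close> \<open>poly p z = 0\<close> \<open>0 < e\<close> by simp
  ultimately have "eventually (\<lambda>n.
      0 < cmod (lead_coeff (P n)) * e ^ degree p - cmod (poly (P n) z)) sequentially"
    by (rule order_tendstoD(1))
  then show ?thesis
    by (rule eventually_mono) (use poly_root_near[OF \<open>0 < e\<close>] degree_P in force)
qed

lemma in_of_real_atMost_if_approx:
  assumes "\<And>e. 0 < e \<Longrightarrow> \<exists>r. r \<le> c + e \<and> cmod (z - of_real r) < e"
  shows "z \<in> complex_of_real ` {..c}"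
proof -
  have close: "\<bar>Im z\<bar> < e \<and> Re z < c + 2 * e" if "0 < e" for e
  proof -
    obtain r where "r \<le> c + e" "cmod (z - of_real r) < e" using assms \<open>0 < e\<close> by blast
    moreover have "\<bar>Im z\<bar> \<le> cmod (z - of_real r)" "Re z - r \<le> cmod (z - of_real r)"
      using abs_Im_le_cmod[of "z - of_real r"] abs_Re_le_cmod[of "z - of_real r"] by auto
    ultimately show ?thesis by linarith
  qed
  have "Im z = 0"
    using close[of "\<bar>Im z\<bar>"] by fastforce
  moreover have "Re z \<le> c"
  proof (rule field_le_epsilon)
    fix e :: real
    assume "0 < e"
    then show "Re z \<le> c + e" using close[of "e / 2"] by simp
  qed
  ultimately show ?thesis
    by (metis atMost_iff complex_is_Real_iff imageI of_real_Re)
qed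

lemma eventually_Zset_near:
  assumes "s \<longlonglongrightarrow> a0" and "\<And>n. s n < 1" and "a0 < 1" and "z \<in> Zset m a0" and "0 < e"
  shows "eventually (\<lambda>n. \<exists>x\<in>Zset m (s n). cmod (z - x) < e) sequentially"
proof -
  have "(\<lambda>n. coeff (H_poly m (s n)) k) \<longlonglongrightarrow> coeff (H_poly m a0) k" for k
    using continuous_on_tendsto_compose[OF continuous_coeff_H_poly \<open>s \<longlonglongrightarrow> a0\<close>] by simp
  moreover have "H_poly m a0 \<noteq> 0"
    using coeff_H_poly_top_nonzero[OF \<open>a0 < 1\<close>, of m] by auto
  moreover have "poly (H_poly m a0) z = 0"
    using \<open>z \<in> Zset m a0\<close> by (simp add: Zset_def poly_H_poly)
  ultimately have "eventually (\<lambda>n.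
      \<exists>x. poly (H_poly m (s n)) x = 0 \<and> cmod (z - x) < e) sequentially"
    using assms by (intro eventually_root_near_of_coeffs_tendsto) (simp_all add: degree_H_poly)
  then show ?thesis
    by (simp add: Zset_def poly_H_poly)
qed

definition Iint_end :: "real \<Rightarrow> real" where
  "Iint_end a = (-2 + 9 * a - 2 * sqrt ((1 - 3 * a) ^ 3)) / 27"

lemma Iint_eq_atMost: "Iint a = {..Iint_end a}"
  by (simp add: Iint_def Iint_end_def)

lemma isCont_Iint_end: "isCont Iint_end a"
  unfolding Iint_end_def by (intro continuous_intros) simp

theorem lemma2p2:
  fixes S :: "real set" and m :: nat
  assumes "S \<subseteq> {-1..1/3}"
    and "{-1..1/3} \<subseteq> closure S"
    and "\<forall>a\<in>S. Zset m a \<subseteq> complex_of_real ` Iint a"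
  shows "\<forall>a\<in>{-1..1/3}. Zset m a \<subseteq> complex_of_real ` Iint a"
proof (intro ballI subsetI)
  fix a0 z
  assume a0: "a0 \<in> {-1..1/3}" and "z \<in> Zset m a0"
  obtain s where s_S: "\<And>n. s n \<in> S" and s_lim: "s \<longlonglongrightarrow> a0"
    using a0 assms(2) closure_sequential by blast
  have "\<exists>r. r \<le> Iint_end a0 + e \<and> cmod (z - of_real r) < e" if "0 < e" for e
  proof -
    have "s n < 1" for n
      using s_S[of n] assms(1) by fastforce
    moreover have "a0 < 1" using a0 by simp
    ultimately have "eventually (\<lambda>n. \<exists>x\<in>Zset m (s n). cmod (z - x) < e) sequentially"
      using \<open>z \<in> Zset m a0\<close> \<open>0 < e\<close> by (intro eventually_Zset_near[OF s_lim])
    moreover have "eventually (\<lambda>n. Iint_end (s n) < Iint_end a0 + e) sequentially"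
      using isCont_tendsto_compose[OF isCont_Iint_end s_lim] \<open>0 < e\<close>
      by (simp add: order_tendstoD(2))
    ultimately have "eventually (\<lambda>n. (\<exists>x\<in>Zset m (s n). cmod (z - x) < e)
        \<and> Iint_end (s n) < Iint_end a0 + e) sequentially"
      by (rule eventually_conj)
    then obtain n x where "x \<in> Zset m (s n)" "cmod (z - x) < e" "Iint_end (s n) < Iint_end a0 + e"
      unfolding eventually_sequentially by blast
    moreover obtain r where "x = of_real r" "r \<le> Iint_end (s n)"
      using assms(3) s_S \<open>x \<in> Zset m (s n)\<close> unfolding Iint_eq_atMost by blast
    ultimately show ?thesis by (intro exI[of _ r]) auto
  qed
  then show "z \<in> complex_of_real ` Iint a0"
    unfolding Iint_eq_atMost by (rule in_of_real_atMost_if_approx)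
qed

end
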